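(* Let $G$ be a labeled complete graph (every edge labeled $+$ or $-$), let $\alpha,\gamma$ be real parameters with $0<\gamma<\alpha<1/2$, and let $x$ be any fractional clustering of $G$. Let $\mathcal{C}$ be the clustering produced by the following algorithm (Algorithm 1), where ties in the choice of pivot are broken arbitrarily: Set $S=V(G)$. While $S\neq\emptyset$: for each $u\in S$ let $T_u=\{w\in S\setminus\{u\} : x_{uw}\le\alpha\}$ and $T^*_u=\{w\in S\setminus\{u\} : x_{uw}\le\gamma\}$; choose a pivot $u\in S$ maximizing $|T^*_u|$ and let $T=T_u$; if $\sum_{w\in T}x_{uw}\ge \alpha|T|/2$, output the cluster $\{u\}$ and set $S=S\setminus\{u\}$; otherwise output the cluster $\{u\}\cup T$ and set $S=S\setminus(\{u\}\cup T)$. Then there is a constant $c$ depending only on $\alpha$ and $\gamma$ such that $\mathrm{err}(\mathcal{C})_v\le c\,\mathrm{err}(x)_v$ for all $v\in V(G)$.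
   Context: A (discrete) clustering of $G$ is a partition of $V(G)$. A fractional clustering of $G$ is a vector $x$ indexed by the unordered pairs of distinct vertices of $G$ with $x_{uv}\in[0,1]$ for all pairs and $x_{vz}\le x_{vw}+x_{wz}$ for all distinct $v,w,z$; by convention $x_{uu}=0$. For vertex $v$, $N^+(v)$ and $N^-(v)$ denote the sets of vertices joined to $v$ by a $+$ edge, resp. a $-$ edge. The error vector of a fractional clustering $x$ is the vector indexed by $V(G)$ with $\mathrm{err}(x)_v=\sum_{w\in N^+(v)}x_{vw}+\sum_{w\in N^-(v)}(1-x_{vw})$. For a clustering $\mathcal{C}$, $x^{\mathcal{C}}$ is the fractional clustering with $x^{\mathcal{C}}_{uv}=0$ if $u,v$ lie in the same cluster and $1$ otherwise, and $\mathrm{err}(\mathcal{C})=\mathrm{err}(x^{\mathcal{C}})$ (so $\mathrm{err}(\mathcal{C})_v$ is the number of $+$ edges at $v$ going between clusters plus the number of $-$ edges at $v$ inside $v$'s cluster). *)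

theory Defs
  imports Complex_Main
begin

definition labeled_complete_graph :: "'a set \<Rightarrow> ('a \<Rightarrow> 'a \<Rightarrow> bool) \<Rightarrow> bool" where
  "labeled_complete_graph V pos \<longleftrightarrow> finite V \<and> (\<forall>u\<in>V. \<forall>w\<in>V. pos u w = pos w u)"

definition fractional_clustering :: "'a set \<Rightarrow> ('a \<Rightarrow> 'a \<Rightarrow> real) \<Rightarrow> bool" where
  "fractional_clustering V x \<longleftrightarrow>
     (\<forall>u\<in>V. x u u = 0) \<and>
     (\<forall>u\<in>V. \<forall>w\<in>V. x u w = x w u) \<and>
     (\<forall>u\<in>V. \<forall>w\<in>V. u \<noteq> w \<longrightarrow> 0 \<le> x u w \<and> x u w \<le> 1) \<and>
     (\<forall>v\<in>V. \<forall>w\<in>V. \<forall>z\<in>V. v \<noteq> w \<and> w \<noteq> z \<and> v \<noteq> z \<longrightarrow> x v z \<le> x v w + x w z)"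

definition err :: "'a set \<Rightarrow> ('a \<Rightarrow> 'a \<Rightarrow> bool) \<Rightarrow> ('a \<Rightarrow> 'a \<Rightarrow> real) \<Rightarrow> 'a \<Rightarrow> real" where
  "err V pos x v = (\<Sum>w\<in>{w\<in>V. w \<noteq> v \<and> pos v w}. x v w) + (\<Sum>w\<in>{w\<in>V. w \<noteq> v \<and> \<not> pos v w}. 1 - x v w)"

definition clustering_vec :: "'a set set \<Rightarrow> 'a \<Rightarrow> 'a \<Rightarrow> real" where
  "clustering_vec C u v = (if u = v \<or> (\<exists>A\<in>C. u \<in> A \<and> v \<in> A) then 0 else 1)"

definition err_clustering :: "'a set \<Rightarrow> ('a \<Rightarrow> 'a \<Rightarrow> bool) \<Rightarrow> 'a set set \<Rightarrow> 'a \<Rightarrow> real" where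
  "err_clustering V pos C v = err V pos (clustering_vec C) v"

definition Tset :: "real \<Rightarrow> ('a \<Rightarrow> 'a \<Rightarrow> real) \<Rightarrow> 'a set \<Rightarrow> 'a \<Rightarrow> 'a set" where
  "Tset t x S u = {w \<in> S - {u}. x u w \<le> t}"

text \<open>Algorithm 1, with arbitrary tie breaking: alg1 alpha gamma x S Cs holds iff
the list of clusters Cs is a possible output of the algorithm started on S.\<close>

inductive alg1 :: "real \<Rightarrow> real \<Rightarrow> ('a \<Rightarrow> 'a \<Rightarrow> real) \<Rightarrow> 'a set \<Rightarrow> 'a set list \<Rightarrow> bool"
  for \<alpha> \<gamma> x where
  stop: "alg1 \<alpha> \<gamma> x {} []"
| single: "\<lbrakk> u \<in> S; \<forall>u'\<in>S. card (Tset \<gamma> x S u') \<le> card (Tset \<gamma> x S u);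
             (\<Sum>w\<in>Tset \<alpha> x S u. x u w) \<ge> \<alpha> * real (card (Tset \<alpha> x S u)) / 2;
             alg1 \<alpha> \<gamma> x (S - {u}) Cs \<rbrakk>
           \<Longrightarrow> alg1 \<alpha> \<gamma> x S ({u} # Cs)"
| cluster: "\<lbrakk> u \<in> S; \<forall>u'\<in>S. card (Tset \<gamma> x S u') \<le> card (Tset \<gamma> x S u);
             (\<Sum>w\<in>Tset \<alpha> x S u. x u w) < \<alpha> * real (card (Tset \<alpha> x S u)) / 2;
             alg1 \<alpha> \<gamma> x (S - insert u (Tset \<alpha> x S u)) Cs \<rbrakk>
           \<Longrightarrow> alg1 \<alpha> \<gamma> x S (insert u (Tset \<alpha> x S u) # Cs)"

end

theory Submission
  imports Defs
begin

text \<open>Fix a vertex v and charge each error at v, along the run of the algorithm, to the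
  fractional cost of the pairs at v: x v w for a + pair, 1 - x v w for a - pair. When a
  cluster {u} \<union> T_u is formed, every misclassified pair at v costs at least
  \<delta> = min \<gamma> ((\<alpha> - \<gamma>)/2) ((1 - 2\<alpha>)/2), except + pairs with x v w \<le> \<delta>. Those occur only if
  x u v is within \<delta> of \<alpha>, and then the choice of the pivot bounds their number by |T*_u|,
  whose members all lie at distance between \<delta> and 1 - \<delta> from v. When v itself is a
  singleton pivot, the singleton test bounds its + neighbours by its cost. What remains
  are cheap + edges from v to singleton pivots, which are paid by a potential.\<close>

definition pair_cost :: "('a \<Rightarrow> 'a \<Rightarrow> bool) \<Rightarrow> ('a \<Rightarrow> 'a \<Rightarrow> real) \<Rightarrow> 'a \<Rightarrow> 'a \<Rightarrow> real" where
  "pair_cost pos f v w = (if pos v w then f v w else 1 - f v w)"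

definition err_on :: "'a set \<Rightarrow> ('a \<Rightarrow> 'a \<Rightarrow> bool) \<Rightarrow> ('a \<Rightarrow> 'a \<Rightarrow> real) \<Rightarrow> 'a \<Rightarrow> real" where
  "err_on S pos f v = (\<Sum>w\<in>S - {v}. pair_cost pos f v w)"

lemma err_eq_err_on:
  assumes "finite V"
  shows "err V pos f v = err_on V pos f v"
proof -
  have "err_on V pos f v = (\<Sum>w\<in>(V - {v}) \<inter> {w. pos v w}. f v w)
                          + (\<Sum>w\<in>(V - {v}) \<inter> - {w. pos v w}. 1 - f v w)"
    unfolding err_on_def pair_cost_def using assms by (simp add: sum.If_cases)
  also have "(V - {v}) \<inter> {w. pos v w} = {w\<in>V. w \<noteq> v \<and> pos v w}" by auto
  also have "(V - {v}) \<inter> - {w. pos v w} = {w\<in>V. w \<noteq> v \<and> \<not> pos v w}" by auto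
  finally show ?thesis unfolding err_def by simp
qed

lemma err_on_split:
  assumes "finite S" "K \<subseteq> S" "v \<notin> K"
  shows "err_on S pos f v = err_on (S - K) pos f v + (\<Sum>w\<in>K. pair_cost pos f v w)"
proof -
  have "S - {v} = (S - K - {v}) \<union> K" using assms by auto
  then show ?thesis
    unfolding err_on_def using assms by (auto intro: sum.union_disjoint rev_finite_subset)
qed

lemma sum_indicator_eq_card:
  "finite A \<Longrightarrow> (\<Sum>w\<in>A. if P w then 1 else 0 :: real) = real (card {w\<in>A. P w})"
  by (simp add: sum.If_cases Int_def conj_commute)

lemma card_le_sum_divide:
  fixes f :: "'a \<Rightarrow> real"
  assumes "finite A" "\<And>w. w \<in> A \<Longrightarrow> t \<le> f w" "0 < t"
  shows "real (card A) \<le> (\<Sum>w\<in>A. f w) / t"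
  using sum_bounded_below[of A t f] assms by (simp add: field_simps)

lemma card_le_three_card_gt_quarter:
  fixes f :: "'a \<Rightarrow> real"
  assumes "finite T" "0 < a" "\<And>z. z \<in> T \<Longrightarrow> f z \<le> a"
    and "a * real (card T) / 2 \<le> (\<Sum>z\<in>T. f z)"
  shows "card T \<le> 3 * card {z\<in>T. a/4 < f z}"
proof -
  let ?H = "{z\<in>T. a/4 < f z}"
  have "(\<Sum>z\<in>T. f z) = (\<Sum>z\<in>?H. f z) + (\<Sum>z\<in>T - ?H. f z)"
    using assms(1) by (metis (no_types, lifting) add.commute mem_Collect_eq subsetI sum.subset_diff)
  also have "(\<Sum>z\<in>?H. f z) \<le> real (card ?H) * a"
    using assms(3) by (intro sum_bounded_above) auto
  also have "(\<Sum>z\<in>T - ?H. f z) \<le> real (card (T - ?H)) * (a/4)"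
    by (intro sum_bounded_above) auto
  also have "real (card (T - ?H)) = real (card T) - real (card ?H)"
    using assms(1) by (simp add: card_Diff_subset card_mono of_nat_diff)
  finally have "a * real (card T) \<le> a * (3 * real (card ?H))"
    using assms(4) by (simp add: algebra_simps)
  then show ?thesis using assms(2) by (simp add: mult_le_cancel_left_pos)
qed

lemma clustering_vec_insert_notin:
  "v \<notin> K \<Longrightarrow> clustering_vec (insert K C) v w = clustering_vec C v w"
  by (simp add: clustering_vec_def)

lemma clustering_vec_insert_both:
  "v \<in> K \<Longrightarrow> w \<in> K \<Longrightarrow> clustering_vec (insert K C) v w = 0"
  by (auto simp: clustering_vec_def)

lemma clustering_vec_insert_separated:
  assumes "a \<in> K" "b \<notin> K" "\<forall>A\<in>C. A \<inter> K = {}"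
  shows "clustering_vec (insert K C) a b = 1" and "clustering_vec (insert K C) b a = 1"
  using assms by (auto simp: clustering_vec_def)

lemma err_on_insert_cluster_member:
  assumes "finite S" "K \<subseteq> S" "v \<in> K" "\<forall>A\<in>C. A \<inter> K = {}"
  shows "err_on S pos (clustering_vec (insert K C)) v
           = real (card {w\<in>S - K. pos v w}) + real (card {w\<in>K - {v}. \<not> pos v w})"
proof -
  let ?c = "pair_cost pos (clustering_vec (insert K C)) v"
  have fin: "finite K" "finite (S - K)" using assms(1,2) by (auto intro: rev_finite_subset)
  have "S - {v} = (S - K) \<union> (K - {v})" using assms(2,3) by auto
  then have "err_on S pos (clustering_vec (insert K C)) v = (\<Sum>w\<in>S - K. ?c w) + (\<Sum>w\<in>K - {v}. ?c w)"
    unfolding err_on_def using fin by (auto intro: sum.union_disjoint)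
  also have "(\<Sum>w\<in>S - K. ?c w) = (\<Sum>w\<in>S - K. if pos v w then 1 else 0)"
  proof (rule sum.cong)
    fix w assume "w \<in> S - K"
    then show "?c w = (if pos v w then 1 else 0)"
      using clustering_vec_insert_separated(1)[OF assms(3) _ assms(4), of w]
      by (simp add: pair_cost_def)
  qed simp
  also have "(\<Sum>w\<in>K - {v}. ?c w) = (\<Sum>w\<in>K - {v}. if \<not> pos v w then 1 else 0)"
    using assms by (intro sum.cong) (auto simp: pair_cost_def clustering_vec_insert_both)
  finally show ?thesis using fin by (simp add: sum_indicator_eq_card)
qed

lemma err_on_insert_cluster_nonmember:
  assumes "finite S" "K \<subseteq> S" "v \<notin> K" "\<forall>A\<in>C. A \<inter> K = {}"
  shows "err_on S pos (clustering_vec (insert K C)) v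
           = err_on (S - K) pos (clustering_vec C) v + real (card {w\<in>K. pos v w})"
proof -
  have "err_on (S - K) pos (clustering_vec (insert K C)) v = err_on (S - K) pos (clustering_vec C) v"
    unfolding err_on_def pair_cost_def clustering_vec_insert_notin[OF assms(3)] ..
  moreover have "(\<Sum>w\<in>K. pair_cost pos (clustering_vec (insert K C)) v w)
                   = (\<Sum>w\<in>K. if pos v w then 1 else 0)"
  proof (rule sum.cong)
    fix w assume "w \<in> K"
    then show "pair_cost pos (clustering_vec (insert K C)) v w = (if pos v w then 1 else 0)"
      using clustering_vec_insert_separated(2)[OF _ assms(3) assms(4), of w]
      by (simp add: pair_cost_def)
  qed simp
  moreover have "finite K" using assms(1,2) by (rule rev_finite_subset)
  ultimately show ?thesis using assms by (simp add: err_on_split sum_indicator_eq_card)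
qed

lemma alg1_clusters_subset: "alg1 \<alpha> \<gamma> x S Cs \<Longrightarrow> A \<in> set Cs \<Longrightarrow> A \<subseteq> S"
  by (induction rule: alg1.induct) (auto simp: Tset_def)definition margin :: "real \<Rightarrow> real \<Rightarrow> real" where
  "margin \<alpha> \<gamma> = min \<gamma> (min ((\<alpha> - \<gamma>) / 2) ((1 - 2 * \<alpha>) / 2))"

locale pivot_analysis =
  fixes \<alpha> \<gamma> :: real and V :: "'a set" and pos :: "'a \<Rightarrow> 'a \<Rightarrow> bool"
    and x :: "'a \<Rightarrow> 'a \<Rightarrow> real" and v :: 'a
  assumes gamma_pos: "0 < \<gamma>" and gamma_less_alpha: "\<gamma> < \<alpha>" and alpha_less_half: "\<alpha> < 1/2"
    and finite_V: "finite V" and fractional: "fractional_clustering V x" and v_in_V: "v \<in> V"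
begin

abbreviation "\<delta> \<equiv> margin \<alpha> \<gamma>"
abbreviation "cost \<equiv> pair_cost pos x v"
abbreviation "lp_err S \<equiv> err_on S pos x v"
abbreviation "cluster_of S u \<equiv> insert u (Tset \<alpha> x S u)"
abbreviation "is_pivot S u \<equiv> \<forall>u'\<in>S. card (Tset \<gamma> x S u') \<le> card (Tset \<gamma> x S u)"
abbreviation "singleton_test S u \<equiv> \<alpha> * real (card (Tset \<alpha> x S u)) / 2 \<le> (\<Sum>w\<in>Tset \<alpha> x S u. x u w)"

lemma alpha_pos: "0 < \<alpha>"
  using gamma_pos gamma_less_alpha by simp

lemma delta_pos: "0 < \<delta>"
  and delta_le_gamma: "\<delta> \<le> \<gamma>"
  and two_delta_le_gap: "2 * \<delta> \<le> \<alpha> - \<gamma>"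
  and two_delta_le_slack: "2 * \<delta> \<le> 1 - 2 * \<alpha>"
  using gamma_pos gamma_less_alpha alpha_less_half by (auto simp: margin_def min_def)

lemma divide_alpha_le_divide_delta: "0 \<le> c \<Longrightarrow> c / \<alpha> \<le> c / \<delta>"
  using delta_pos two_delta_le_gap gamma_pos by (intro divide_left_mono) auto

lemma x_sym: "a \<in> V \<Longrightarrow> b \<in> V \<Longrightarrow> x a b = x b a"
  and x_self: "a \<in> V \<Longrightarrow> x a a = 0"
  and x_nonneg: "a \<in> V \<Longrightarrow> b \<in> V \<Longrightarrow> 0 \<le> x a b"
  and x_le_one: "a \<in> V \<Longrightarrow> b \<in> V \<Longrightarrow> x a b \<le> 1"
  using fractional by (cases "a = b"; auto simp: fractional_clustering_def)+

lemma x_triangle: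
  assumes "a \<in> V" "b \<in> V" "c \<in> V"
  shows "x a c \<le> x a b + x b c"
proof -
  consider "a = b \<or> b = c \<or> a = c" | "a \<noteq> b" "b \<noteq> c" "a \<noteq> c" by blast
  then show ?thesis
  proof cases
    case 2
    then show ?thesis using fractional assms unfolding fractional_clustering_def by blast
  qed (use assms x_self x_nonneg in auto)
qed

lemma finite_if_subset_V: "S \<subseteq> V \<Longrightarrow> finite S"
  using finite_V by (rule rev_finite_subset)

lemma cost_nonneg: "w \<in> V \<Longrightarrow> 0 \<le> cost w"
  using x_nonneg[OF v_in_V] x_le_one[OF v_in_V] by (simp add: pair_cost_def)

lemma lp_err_nonneg: "S \<subseteq> V \<Longrightarrow> 0 \<le> lp_err S"
  unfolding err_on_def by (intro sum_nonneg cost_nonneg) auto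

lemma sum_cost_le_lp_err:
  assumes "A \<subseteq> S - {v}" "S \<subseteq> V"
  shows "(\<Sum>w\<in>A. cost w) \<le> lp_err S"
  unfolding err_on_def
  using assms finite_if_subset_V cost_nonneg by (intro sum_mono2) auto

lemma sum_cost_disjoint_le_lp_err:
  assumes "A \<inter> B = {}" "A \<union> B \<subseteq> S - {v}" "S \<subseteq> V"
  shows "(\<Sum>w\<in>A. cost w) + (\<Sum>w\<in>B. cost w) \<le> lp_err S"
proof -
  have "finite (A \<union> B)" using assms(2,3) by (intro finite_if_subset_V) auto
  then have "(\<Sum>w\<in>A. cost w) + (\<Sum>w\<in>B. cost w) = (\<Sum>w\<in>A \<union> B. cost w)"
    using assms(1) by (simp add: sum.union_disjoint)
  also have "\<dots> \<le> lp_err S" using assms(2,3) by (rule sum_cost_le_lp_err)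
  finally show ?thesis .
qed

lemma card_positive_le_far_cost_near_card:
  assumes "finite A" "A \<subseteq> V"
  shows "real (card {w\<in>A. pos v w})
           \<le> (\<Sum>w\<in>{w\<in>A. \<delta> < x v w}. cost w) / \<delta> + real (card {w\<in>A. x v w \<le> \<delta>})"
proof -
  let ?far = "{w\<in>A. pos v w \<and> \<delta> < x v w}" and ?near = "{w\<in>A. x v w \<le> \<delta>}"
  have "card {w\<in>A. pos v w} \<le> card (?far \<union> ?near)"
    using assms(1) by (intro card_mono) auto
  also have "\<dots> \<le> card ?far + card ?near" by (rule card_Un_le)
  finally have "real (card {w\<in>A. pos v w}) \<le> real (card ?far) + real (card ?near)" by simp
  moreover have "real (card ?far) \<le> (\<Sum>w\<in>?far. cost w) / \<delta>"
    using assms(1) delta_pos by (intro card_le_sum_divide) (auto simp: pair_cost_def)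
  moreover have "(\<Sum>w\<in>?far. cost w) \<le> (\<Sum>w\<in>{w\<in>A. \<delta> < x v w}. cost w)"
    using assms cost_nonneg by (intro sum_mono2) auto
  then have "(\<Sum>w\<in>?far. cost w) / \<delta> \<le> (\<Sum>w\<in>{w\<in>A. \<delta> < x v w}. cost w) / \<delta>"
    using delta_pos by (intro divide_right_mono) auto
  ultimately show ?thesis by linarith
qed

lemma singleton_pivot_self_bound:
  assumes SV: "S \<subseteq> V" and vS: "v \<in> S" and singleton: "singleton_test S v"
  shows "real (card {w\<in>S - {v}. pos v w}) \<le> (2 / \<alpha>) * lp_err S"
proof -
  let ?T = "Tset \<alpha> x S v"
  let ?F = "{w\<in>S - {v}. pos v w} - ?T"
  have finS: "finite S" using SV by (rule finite_if_subset_V)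
  then have fin: "finite ?T" "finite ?F" by (auto simp: Tset_def)
  have "card {w\<in>S - {v}. pos v w} \<le> card (?T \<union> ?F)"
    using fin by (intro card_mono) auto
  also have "\<dots> \<le> card ?T + card ?F" by (rule card_Un_le)
  finally have "real (card {w\<in>S - {v}. pos v w}) \<le> real (card ?T) + real (card ?F)"
    by simp
  moreover have "real (card ?T) \<le> (2 / \<alpha>) * (\<Sum>w\<in>?T. cost w)"
  proof -
    have "(\<Sum>w\<in>?T. x v w) \<le> (\<Sum>w\<in>?T. cost w)"
      using alpha_less_half by (intro sum_mono) (auto simp: Tset_def pair_cost_def)
    then show ?thesis using singleton alpha_pos by (simp add: field_simps)
  qed
  moreover have "real (card ?F) \<le> (2 / \<alpha>) * (\<Sum>w\<in>?F. cost w)"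
  proof -
    have "real (card ?F) \<le> (\<Sum>w\<in>?F. cost w) / \<alpha>"
      using fin alpha_pos by (intro card_le_sum_divide) (auto simp: Tset_def pair_cost_def)
    moreover have "0 \<le> (\<Sum>w\<in>?F. cost w)" using SV by (intro sum_nonneg cost_nonneg) auto
    ultimately show ?thesis using alpha_pos by (simp add: field_simps)
  qed
  moreover have "(2 / \<alpha>) * ((\<Sum>w\<in>?T. cost w) + (\<Sum>w\<in>?F. cost w)) \<le> (2 / \<alpha>) * lp_err S"
    using SV alpha_pos by (intro mult_left_mono sum_cost_disjoint_le_lp_err) (auto simp: Tset_def)
  ultimately show ?thesis by (simp add: distrib_left)
qed

lemma x_le_two_alpha_in_cluster:
  assumes "S \<subseteq> V" "u \<in> S" "a \<in> cluster_of S u" "b \<in> cluster_of S u"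
  shows "x a b \<le> 2 * \<alpha>"
proof -
  have "x u a \<le> \<alpha>" "x u b \<le> \<alpha>" "a \<in> V" "b \<in> V" "u \<in> V"
    using assms alpha_pos x_self by (auto simp: Tset_def)
  then show ?thesis using x_triangle[of a u b] x_sym[of a u] by linarith
qed

lemma near_card_le_pivot_ball_cost:
  assumes SV: "S \<subseteq> V" and uS: "u \<in> S" and vS: "v \<in> S" and vu: "v \<noteq> u"
    and pivot: "is_pivot S u" and near: "\<bar>x u v - \<alpha>\<bar> \<le> \<delta>"
  shows "real (card (Tset \<delta> x S v)) \<le> (\<Sum>z\<in>Tset \<gamma> x S u - {v}. cost z) / \<delta>"
proof -
  let ?G = "Tset \<gamma> x S u"
  have finS: "finite S" using SV by (rule finite_if_subset_V)
  have uV: "u \<in> V" using uS SV by auto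
  have "v \<notin> ?G" using near two_delta_le_gap delta_pos by (auto simp: Tset_def)
  then have G: "?G - {v} = ?G" by simp
  have "card (Tset \<delta> x S v) \<le> card (Tset \<gamma> x S v)"
    using finS delta_le_gamma by (intro card_mono) (auto simp: Tset_def)
  also have "\<dots> \<le> card ?G" using pivot vS by blast
  finally have "real (card (Tset \<delta> x S v)) \<le> real (card ?G)" by simp
  also have "\<dots> \<le> (\<Sum>z\<in>?G. cost z) / \<delta>"
  proof (rule card_le_sum_divide)
    show "finite ?G" using finS by (simp add: Tset_def)
    show "0 < \<delta>" by (rule delta_pos)
    fix z assume "z \<in> ?G"
    then have zV: "z \<in> V" and xuz: "x u z \<le> \<gamma>" using SV by (auto simp: Tset_def)
    have "x v u \<le> x v z + x z u" "x v z \<le> x v u + x u z"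
      using x_triangle[OF v_in_V zV uV] x_triangle[OF v_in_V uV zV] by auto
    then have "\<delta> \<le> x v z" "x v z \<le> 1 - \<delta>"
      using near xuz x_sym[OF v_in_V uV] x_sym[OF zV uV] two_delta_le_gap two_delta_le_slack
        gamma_less_alpha by auto
    then show "\<delta> \<le> cost z" by (auto simp: pair_cost_def)
  qed
  finally show ?thesis unfolding G .
qed

lemma cluster_member_negative_bound:
  assumes SV: "S \<subseteq> V" and uS: "u \<in> S" and vK: "v \<in> cluster_of S u"
  shows "real (card {w\<in>cluster_of S u - {v}. \<not> pos v w}) \<le> lp_err S / \<delta>"
proof -
  let ?N = "{w\<in>cluster_of S u - {v}. \<not> pos v w}"
  have NS: "?N \<subseteq> S - {v}" using uS by (auto simp: Tset_def)
  have "real (card ?N) \<le> (\<Sum>w\<in>?N. cost w) / \<delta>"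
  proof (rule card_le_sum_divide)
    show "finite ?N" using NS SV by (intro finite_if_subset_V) auto
    show "0 < \<delta>" by (rule delta_pos)
    fix w assume "w \<in> ?N"
    then have "x v w \<le> 2 * \<alpha>" "\<not> pos v w"
      using x_le_two_alpha_in_cluster[OF SV uS vK] by auto
    then show "\<delta> \<le> cost w" using two_delta_le_slack delta_pos by (simp add: pair_cost_def)
  qed
  also have "\<dots> \<le> lp_err S / \<delta>"
    using NS SV delta_pos by (intro divide_right_mono sum_cost_le_lp_err) auto
  finally show ?thesis .
qed

lemma cluster_member_positive_bound:
  assumes SV: "S \<subseteq> V" and uS: "u \<in> S" and vK: "v \<in> cluster_of S u" and pivot: "is_pivot S u"
  shows "real (card {w\<in>S - cluster_of S u. pos v w}) \<le> lp_err S / \<delta>"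
proof -
  let ?A = "S - cluster_of S u"
  let ?near = "{w\<in>?A. x v w \<le> \<delta>}"
  let ?G = "Tset \<gamma> x S u - {v}"
  have finS: "finite S" using SV by (rule finite_if_subset_V)
  then have finA: "finite ?A" by simp
  have vS: "v \<in> S" and uV: "u \<in> V" using vK uS SV by (auto simp: Tset_def)
  have "real (card ?near) \<le> (\<Sum>w\<in>?G. cost w) / \<delta>"
  proof (cases "?near = {}")
    case True
    have "0 \<le> (\<Sum>w\<in>?G. cost w) / \<delta>"
      using SV delta_pos by (intro divide_nonneg_pos sum_nonneg cost_nonneg) (auto simp: Tset_def)
    then show ?thesis unfolding True by simp
  next
    case False
    then obtain w0 where w0: "w0 \<in> S" "w0 \<notin> cluster_of S u" "x v w0 \<le> \<delta>" by auto
    have w0V: "w0 \<in> V" using w0 SV by auto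
    have vu: "v \<noteq> u" using w0 gamma_pos two_delta_le_gap delta_pos by (auto simp: Tset_def)
    have "\<alpha> < x u w0" using w0 by (auto simp: Tset_def)
    moreover have "x u w0 \<le> x u v + x v w0" using x_triangle[OF uV v_in_V w0V] .
    moreover have "x u v \<le> \<alpha>" using vK vu by (auto simp: Tset_def)
    ultimately have "\<bar>x u v - \<alpha>\<bar> \<le> \<delta>" using w0 by auto
    then have "real (card (Tset \<delta> x S v)) \<le> (\<Sum>w\<in>?G. cost w) / \<delta>"
      using near_card_le_pivot_ball_cost[OF SV uS vS vu pivot] by blast
    moreover have "card ?near \<le> card (Tset \<delta> x S v)"
      using finS vK by (intro card_mono) (auto simp: Tset_def)
    ultimately show ?thesis by linarith
  qed
  moreover have "(\<Sum>w\<in>{w\<in>?A. \<delta> < x v w}. cost w) + (\<Sum>w\<in>?G. cost w) \<le> lp_err S"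
    using SV vK gamma_less_alpha by (intro sum_cost_disjoint_le_lp_err) (auto simp: Tset_def)
  then have "(\<Sum>w\<in>{w\<in>?A. \<delta> < x v w}. cost w) / \<delta> + (\<Sum>w\<in>?G. cost w) / \<delta> \<le> lp_err S / \<delta>"
    using delta_pos by (simp add: add_divide_distrib[symmetric] divide_right_mono)
  moreover have "real (card {w\<in>?A. pos v w})
                   \<le> (\<Sum>w\<in>{w\<in>?A. \<delta> < x v w}. cost w) / \<delta> + real (card ?near)"
    using finA SV by (intro card_positive_le_far_cost_near_card) auto
  ultimately show ?thesis by linarith
qed

lemma cluster_outsider_bound:
  assumes SV: "S \<subseteq> V" and uS: "u \<in> S" and vS: "v \<in> S" and vK: "v \<notin> cluster_of S u"
    and pivot: "is_pivot S u"
  shows "real (card {w\<in>cluster_of S u. pos v w}) \<le> (2 / \<delta>) * (\<Sum>w\<in>cluster_of S u. cost w)"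
proof -
  let ?K = "cluster_of S u"
  let ?near = "{w\<in>?K. x v w \<le> \<delta>}"
  have KS: "?K \<subseteq> S" using uS by (auto simp: Tset_def)
  have finS: "finite S" using SV by (rule finite_if_subset_V)
  have finK: "finite ?K" using KS finS by (rule rev_finite_subset[rotated])
  have uV: "u \<in> V" and vu: "v \<noteq> u" using uS SV vK by auto
  have sum_le_K: "(\<Sum>w\<in>A. cost w) / \<delta> \<le> (\<Sum>w\<in>?K. cost w) / \<delta>" if "A \<subseteq> ?K" for A
    using that finK KS SV cost_nonneg delta_pos by (intro divide_right_mono sum_mono2) auto
  have "real (card ?near) \<le> (\<Sum>w\<in>?K. cost w) / \<delta>"
  proof (cases "?near = {}")
    case True
    have "0 \<le> (\<Sum>w\<in>?K. cost w) / \<delta>"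
      using KS SV delta_pos by (intro divide_nonneg_pos sum_nonneg cost_nonneg) auto
    then show ?thesis unfolding True by simp
  next
    case False
    then obtain w0 where w0: "w0 \<in> ?K" "x v w0 \<le> \<delta>" by auto
    have w0V: "w0 \<in> V" using w0 KS SV by auto
    have "\<alpha> < x u v" using vK vS by (auto simp: Tset_def)
    moreover have "w0 \<noteq> u"
      using w0 calculation x_sym[OF v_in_V uV] delta_le_gamma gamma_less_alpha by auto
    then have "x u w0 \<le> \<alpha>" using w0 by (auto simp: Tset_def)
    moreover have "x u v \<le> x u w0 + x w0 v" using x_triangle[OF uV w0V v_in_V] .
    ultimately have "\<bar>x u v - \<alpha>\<bar> \<le> \<delta>" using w0 x_sym[OF v_in_V w0V] by auto
    then have "real (card (Tset \<delta> x S v)) \<le> (\<Sum>w\<in>Tset \<gamma> x S u - {v}. cost w) / \<delta>"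
      using near_card_le_pivot_ball_cost[OF SV uS vS vu pivot] by blast
    also have "\<dots> \<le> (\<Sum>w\<in>?K. cost w) / \<delta>"
      using gamma_less_alpha by (intro sum_le_K) (auto simp: Tset_def)
    moreover have "card ?near \<le> card (Tset \<delta> x S v)"
      using finS KS vK by (intro card_mono) (auto simp: Tset_def)
    ultimately show ?thesis by linarith
  qed
  moreover have "(\<Sum>w\<in>{w\<in>?K. \<delta> < x v w}. cost w) / \<delta> \<le> (\<Sum>w\<in>?K. cost w) / \<delta>"
    by (intro sum_le_K) auto
  moreover have "real (card {w\<in>?K. pos v w})
                   \<le> (\<Sum>w\<in>{w\<in>?K. \<delta> < x v w}. cost w) / \<delta> + real (card ?near)"
    using finK KS SV by (intro card_positive_le_far_cost_near_card) auto
  ultimately show ?thesis by (simp add: field_simps)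
qed

text \<open>A singleton pivot u with a + edge to v and x v u < \<alpha>/8 cuts an edge that the
  cost of u cannot pay for. Such a u is \<alpha>/8-close to v, and the singleton test forces a
  third of its \<alpha>-ball to be \<alpha>/4-far from u, hence to consist of vertices of cost at least
  \<alpha>/8. The cut is paid by a potential counting the \<alpha>/8-ball of v, capped by four times the
  number of such expensive vertices; the cap never binds while such pivots occur.\<close>

definition expensive :: "'a set" where
  "expensive = {z\<in>V - {v}. \<alpha>/8 \<le> cost z}"

definition potential :: "'a set \<Rightarrow> real" where
  "potential S = min (real (card (Tset (\<alpha>/8) x S v))) (4 * real (card expensive))"

lemma potential_nonneg: "0 \<le> potential S"
  by (simp add: potential_def)

lemma potential_mono:
  assumes "S' \<subseteq> S" "S \<subseteq> V"
  shows "potential S' \<le> potential S"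
proof -
  have "finite (Tset (\<alpha>/8) x S v)"
    using assms finite_if_subset_V by (auto simp: Tset_def)
  then have "card (Tset (\<alpha>/8) x S' v) \<le> card (Tset (\<alpha>/8) x S v)"
    using assms(1) by (intro card_mono) (auto simp: Tset_def)
  then show ?thesis by (auto simp: potential_def)
qed

lemma potential_le_lp_err: "potential V \<le> (32 / \<alpha>) * lp_err V"
proof -
  have "real (card expensive) \<le> (\<Sum>w\<in>expensive. cost w) / (\<alpha>/8)"
    using finite_V alpha_pos by (intro card_le_sum_divide) (auto simp: expensive_def)
  also have "\<dots> \<le> lp_err V / (\<alpha>/8)"
    using alpha_pos by (intro divide_right_mono sum_cost_le_lp_err) (auto simp: expensive_def)
  finally have "4 * real (card expensive) \<le> (32 / \<alpha>) * lp_err V"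
    using alpha_pos by (simp add: field_simps)
  then show ?thesis by (simp add: potential_def)
qed

lemma close_ball_card_le_expensive:
  assumes SV: "S \<subseteq> V" and uS: "u \<in> S" and vS: "v \<in> S" and vu: "v \<noteq> u"
    and close: "x v u < \<alpha>/8"
    and singleton: "singleton_test S u"
  shows "card (Tset (\<alpha>/8) x S v) \<le> 4 * card expensive"
proof -
  let ?T = "Tset \<alpha> x S u"
  let ?H = "{z\<in>?T. \<alpha>/4 < x u z}"
  have finS: "finite S" using SV by (rule finite_if_subset_V)
  then have finT: "finite ?T" by (simp add: Tset_def)
  have uV: "u \<in> V" using uS SV by auto
  have "Tset (\<alpha>/8) x S v \<subseteq> insert u ?T"
  proof
    fix z assume z: "z \<in> Tset (\<alpha>/8) x S v"
    then have "z \<in> V" using SV by (auto simp: Tset_def)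
    then have "x u z \<le> x u v + x v z" by (rule x_triangle[OF uV v_in_V])
    then show "z \<in> insert u ?T"
      using z close x_sym[OF v_in_V uV] alpha_pos by (auto simp: Tset_def)
  qed
  then have "card (Tset (\<alpha>/8) x S v) \<le> card (insert u ?T)"
    using finT by (intro card_mono) auto
  also have "\<dots> \<le> card ?T + 1" using finT by (simp add: card_insert_if)
  finally have "card (Tset (\<alpha>/8) x S v) \<le> card ?T + 1" .
  moreover have "card ?T \<le> 3 * card ?H"
    using finT alpha_pos by (intro card_le_three_card_gt_quarter singleton) (auto simp: Tset_def)
  moreover have "?T \<noteq> {}"
    using vS vu close x_sym[OF v_in_V uV] alpha_pos by (auto simp: Tset_def)
  then have "card ?T \<noteq> 0" using finT by simp
  then have "card ?H \<noteq> 0" using \<open>card ?T \<le> 3 * card ?H\<close> by linarith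
  moreover have "?H \<subseteq> expensive"
  proof
    fix z assume z: "z \<in> ?H"
    then have zV: "z \<in> V" and xuz: "\<alpha>/4 < x u z" "x u z \<le> \<alpha>" using SV by (auto simp: Tset_def)
    have "x u z \<le> x u v + x v z" "x v z \<le> x v u + x u z"
      using x_triangle[OF uV v_in_V zV] x_triangle[OF v_in_V uV zV] by auto
    then have "\<alpha>/8 < x v z" "x v z \<le> 1 - \<alpha>/8"
      using xuz close x_sym[OF v_in_V uV] alpha_less_half by auto
    then show "z \<in> expensive"
      using zV alpha_pos x_self[OF v_in_V] by (auto simp: expensive_def pair_cost_def)
  qed
  then have "card ?H \<le> card expensive"
    using finite_V by (intro card_mono) (auto simp: expensive_def)
  ultimately show ?thesis by linarith
qed

lemma singleton_other_bound:
  assumes SV: "S \<subseteq> V" and uS: "u \<in> S" and vS: "v \<in> S" and vu: "v \<noteq> u"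
    and singleton: "singleton_test S u"
  shows "(if pos v u then 1 else 0) \<le> (8 / \<alpha>) * cost u + (potential S - potential (S - {u}))"
proof -
  have uV: "u \<in> V" using uS SV by auto
  have finS: "finite S" using SV by (rule finite_if_subset_V)
  have drop: "potential (S - {u}) \<le> potential S" using SV by (intro potential_mono) auto
  have cost_part: "0 \<le> (8 / \<alpha>) * cost u" using cost_nonneg[OF uV] alpha_pos by simp
  consider "\<not> pos v u" | "pos v u" "\<alpha>/8 \<le> x v u" | "pos v u" "x v u < \<alpha>/8" by linarith
  then show ?thesis
  proof cases
    case 1
    then show ?thesis using drop cost_part by simp
  next
    case 2
    then have "1 \<le> (8 / \<alpha>) * cost u" using alpha_pos by (simp add: pair_cost_def field_simps)
    then show ?thesis using 2 drop by simp
  next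
    case 3
    let ?D = "Tset (\<alpha>/8) x S v"
    have finD: "finite ?D" using finS by (auto simp: Tset_def)
    have uD: "u \<in> ?D" using uS vu 3 by (auto simp: Tset_def)
    have "Tset (\<alpha>/8) x (S - {u}) v = ?D - {u}" by (auto simp: Tset_def)
    moreover have "1 \<le> card ?D" using uD finD by (metis Suc_leI card_gt_0_iff empty_iff One_nat_def)
    ultimately have "real (card (Tset (\<alpha>/8) x (S - {u}) v)) = real (card ?D) - 1"
      using uD finD by (simp add: of_nat_diff)
    moreover have "card ?D \<le> 4 * card expensive"
      using close_ball_card_le_expensive[OF SV uS vS vu 3(2) singleton] .
    ultimately have "potential S - potential (S - {u}) = 1" by (simp add: potential_def)
    then show ?thesis using cost_part by simp
  qed
qed

abbreviation "budget S \<equiv> (8 / \<delta>) * lp_err S + potential S"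

lemma singleton_step:
  assumes SV: "S \<subseteq> V" and vS: "v \<in> S" and uS: "u \<in> S" and singleton: "singleton_test S u"
    and disjoint: "\<forall>A\<in>C. A \<inter> {u} = {}"
    and IH: "v \<noteq> u \<Longrightarrow> err_on (S - {u}) pos (clustering_vec C) v \<le> budget (S - {u})"
  shows "err_on S pos (clustering_vec (insert {u} C)) v \<le> budget S"
proof -
  have finS: "finite S" using SV by (rule finite_if_subset_V)
  have uV: "u \<in> V" using uS SV by auto
  show ?thesis
  proof (cases "v = u")
    case True
    have "err_on S pos (clustering_vec (insert {u} C)) v = real (card {w\<in>S - {v}. pos v w})"
      using err_on_insert_cluster_member[OF finS _ _ disjoint, where pos = pos] uS True by simp
    also have "\<dots> \<le> (2 / \<alpha>) * lp_err S"
      using singleton_pivot_self_bound[OF SV vS] singleton True by blast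
    also have "\<dots> \<le> (8 / \<delta>) * lp_err S"
    proof (rule mult_right_mono)
      have "2 / \<alpha> \<le> 8 / \<alpha>" using alpha_pos by (intro divide_right_mono) auto
      then show "2 / \<alpha> \<le> 8 / \<delta>" using divide_alpha_le_divide_delta[of 8] by linarith
    qed (rule lp_err_nonneg[OF SV])
    finally show ?thesis using potential_nonneg[of S] by linarith
  next
    case False
    have "err_on S pos (clustering_vec (insert {u} C)) v
            = err_on (S - {u}) pos (clustering_vec C) v + (if pos v u then 1 else 0)"
      using err_on_insert_cluster_nonmember[OF finS _ _ disjoint, where v = v and pos = pos] uS False
      by (simp add: Collect_conv_if)
    also have "err_on (S - {u}) pos (clustering_vec C) v \<le> budget (S - {u})"
      using IH False by blast
    also have "(if pos v u then 1 else 0) \<le> (8 / \<alpha>) * cost u + (potential S - potential (S - {u}))"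
      using singleton_other_bound[OF SV uS vS] False singleton by auto
    also have "(8 / \<alpha>) * cost u \<le> (8 / \<delta>) * cost u"
      using divide_alpha_le_divide_delta[of 8] cost_nonneg[OF uV] by (intro mult_right_mono) auto
    also have "lp_err S = lp_err (S - {u}) + cost u"
      using err_on_split[OF finS, where K = "{u}" and v = v and pos = pos and f = x] uS False by simp
    ultimately show ?thesis by (simp add: distrib_left)
  qed
qed

lemma cluster_step:
  assumes SV: "S \<subseteq> V" and vS: "v \<in> S" and uS: "u \<in> S" and pivot: "is_pivot S u"
    and disjoint: "\<forall>A\<in>C. A \<inter> cluster_of S u = {}"
    and IH: "v \<notin> cluster_of S u \<Longrightarrow>
               err_on (S - cluster_of S u) pos (clustering_vec C) v \<le> budget (S - cluster_of S u)"
  shows "err_on S pos (clustering_vec (insert (cluster_of S u) C)) v \<le> budget S"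
proof -
  let ?K = "cluster_of S u"
  have finS: "finite S" using SV by (rule finite_if_subset_V)
  have KS: "?K \<subseteq> S" using uS by (auto simp: Tset_def)
  show ?thesis
  proof (cases "v \<in> ?K")
    case True
    have "err_on S pos (clustering_vec (insert ?K C)) v
            = real (card {w\<in>S - ?K. pos v w}) + real (card {w\<in>?K - {v}. \<not> pos v w})"
      using err_on_insert_cluster_member[OF finS KS True disjoint] .
    also have "\<dots> \<le> lp_err S / \<delta> + lp_err S / \<delta>"
      using cluster_member_positive_bound[OF SV uS True pivot]
        cluster_member_negative_bound[OF SV uS True] by linarith
    also have "\<dots> \<le> (8 / \<delta>) * lp_err S"
      using lp_err_nonneg[OF SV] delta_pos by (simp add: field_simps)
    finally show ?thesis using potential_nonneg[of S] by linarith
  next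
    case False
    have "err_on S pos (clustering_vec (insert ?K C)) v
            = err_on (S - ?K) pos (clustering_vec C) v + real (card {w\<in>?K. pos v w})"
      using err_on_insert_cluster_nonmember[OF finS KS False disjoint] .
    also have "err_on (S - ?K) pos (clustering_vec C) v \<le> budget (S - ?K)"
      using IH False by blast
    also have "real (card {w\<in>?K. pos v w}) \<le> (2 / \<delta>) * (\<Sum>w\<in>?K. cost w)"
      using cluster_outsider_bound[OF SV uS vS False pivot] .
    also have "(2 / \<delta>) * (\<Sum>w\<in>?K. cost w) \<le> (8 / \<delta>) * (\<Sum>w\<in>?K. cost w)"
      using KS SV delta_pos
      by (intro mult_right_mono sum_nonneg cost_nonneg) (auto simp: divide_right_mono)
    also have "potential (S - ?K) \<le> potential S"
      using SV by (intro potential_mono) auto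
    also have "lp_err S = lp_err (S - ?K) + (\<Sum>w\<in>?K. cost w)"
      using err_on_split[OF finS KS False] .
    ultimately show ?thesis by (simp add: distrib_left)
  qed
qed

lemma clustering_err_le_budget:
  assumes "alg1 \<alpha> \<gamma> x S Cs" "S \<subseteq> V" "v \<in> S"
  shows "err_on S pos (clustering_vec (set Cs)) v \<le> budget S"
  using assms
proof (induction rule: alg1.induct)
  case stop
  then show ?case by simp
next
  case (single u S Cs)
  then show ?case
    using singleton_step[of S u "set Cs"] alg1_clusters_subset[OF single.hyps(4)] by auto
next
  case (cluster u S Cs)
  then show ?case
    using cluster_step[of S u "set Cs"] alg1_clusters_subset[OF cluster.hyps(4)] by auto
qed

lemma err_clustering_le:
  assumes "alg1 \<alpha> \<gamma> x V Cs"
  shows "err_clustering V pos (set Cs) v \<le> (40 / \<delta>) * err V pos x v"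
proof -
  have "err_clustering V pos (set Cs) v \<le> (8 / \<delta>) * lp_err V + potential V"
    unfolding err_clustering_def err_eq_err_on[OF finite_V]
    using clustering_err_le_budget[OF assms order_refl v_in_V] .
  also have "potential V \<le> (32 / \<alpha>) * lp_err V" by (rule potential_le_lp_err)
  also have "\<dots> \<le> (32 / \<delta>) * lp_err V"
    using divide_alpha_le_divide_delta[of 32] lp_err_nonneg[of V] by (intro mult_right_mono) auto
  finally show ?thesis
    unfolding err_eq_err_on[OF finite_V] by (simp add: field_simps)
qed

end

theorem theorem1:
  fixes \<alpha> \<gamma> :: real
  assumes "0 < \<gamma>" and "\<gamma> < \<alpha>" and "\<alpha> < 1/2"
  shows "\<exists>c::real. \<forall>(V::'a set) pos x Cs.
           labeled_complete_graph V pos \<and> fractional_clustering V x \<and> alg1 \<alpha> \<gamma> x V Cs \<longrightarrow>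
           (\<forall>v\<in>V. err_clustering V pos (set Cs) v \<le> c * err V pos x v)"
proof (intro exI[of _ "40 / margin \<alpha> \<gamma>"] allI impI ballI)
  fix V :: "'a set" and pos x Cs v
  assume H: "labeled_complete_graph V pos \<and> fractional_clustering V x \<and> alg1 \<alpha> \<gamma> x V Cs"
    and "v \<in> V"
  then interpret pivot_analysis \<alpha> \<gamma> V pos x v
    using assms by unfold_locales (auto simp: labeled_complete_graph_def)
  show "err_clustering V pos (set Cs) v \<le> 40 / margin \<alpha> \<gamma> * err V pos x v"
    using err_clustering_le H by simp
qed

end
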